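(* For every $k>0$ and all $m$-dimensional bodies $A_1,A_2$, $\delta_k(A_1\cup A_2)+\delta_k(A_1\cap A_2)\ge\delta_k(A_1)+\delta_k(A_2)$.
   Context: An $m$-dimensional body is a compact subset of $\mathbb R_+^m$. For $k>0$, its $k$-deficiency is $\delta_k(A)=|A|-k\sum_{j=1}^m|A_{[m]\setminus\{j\}}|$, where $A_{[m]\setminus\{j\}}=\{\mathbf x_{-j}:\mathbf x\in A\}\subseteq\mathbb R^{m-1}$ is the projection deleting coordinate $j$ and $|\cdot|$ denotes Lebesgue measure of the relevant dimension. *)

theory Defs
  imports "HOL-Analysis.Analysis"
begin

text \<open>Points of R^m are modelled as functions nat => real that are extensional
  on the index set {..<m} (coordinates 0,...,m-1). Lebesgue measure on R^I is the
  product measure PiM I (%_. lborel). Bodies are compact (product topology on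
  nat => real, which agrees with the Euclidean topology on the m-dimensional part).\<close>

definition body :: "nat \<Rightarrow> (nat \<Rightarrow> real) set \<Rightarrow> bool" where
  "body m A \<longleftrightarrow> compact A \<and>
     A \<subseteq> {x. x \<in> extensional {..<m} \<and> (\<forall>i<m. 0 \<le> x i)}"

definition proj_del :: "nat \<Rightarrow> nat \<Rightarrow> (nat \<Rightarrow> real) set \<Rightarrow> (nat \<Rightarrow> real) set" where
  "proj_del m j A = (\<lambda>x. restrict x ({..<m} - {j})) ` A"

definition deficiency :: "nat \<Rightarrow> real \<Rightarrow> (nat \<Rightarrow> real) set \<Rightarrow> real" where
  "deficiency m k A =
     measure (PiM {..<m} (\<lambda>_. lborel)) A
     - k * (\<Sum>j<m. measure (PiM ({..<m} - {j}) (\<lambda>_. lborel)) (proj_del m j A))"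

end

theory Submission
  imports Defs
begin

text \<open>Volume is modular on bodies: the volume of the union plus that of the intersection
  equals the sum of the volumes. Each projection term is submodular instead, because
  projecting commutes with unions but only maps the intersection into the intersection of
  the projections. Since the projection terms enter the deficiency with the negative weight
  \<open>-k\<close>, the deficiency is supermodular.\<close>

lemma measurable_id_PiM_lborel_borel:
  "(\<lambda>x::nat\<Rightarrow>real. x) \<in> measurable (PiM I (\<lambda>_. lborel)) (PiM UNIV (\<lambda>_. borel))"
proof -
  have component: "(\<lambda>x::nat\<Rightarrow>real. x i) \<in> measurable (PiM I (\<lambda>_. lborel)) borel" for i
  proof (cases "i \<in> I")
    case True
    then have "(\<lambda>x::nat\<Rightarrow>real. x i) \<in> measurable (PiM I (\<lambda>_. lborel)) lborel"
      by (rule measurable_component_singleton)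
    then show ?thesis by (simp only: measurable_lborel1)
  next
    case False
    then have "x i = undefined" if "x \<in> space (PiM I (\<lambda>_. lborel))" for x :: "nat \<Rightarrow> real"
      using that unfolding space_PiM PiE_def extensional_def by blast
    then show ?thesis
      by (rule measurable_cong[THEN iffD2, OF _ measurable_const]) simp_all
  qed
  have "(\<lambda>x::nat\<Rightarrow>real. \<lambda>i. x i) \<in> space (PiM I (\<lambda>_. lborel)) \<rightarrow> (\<Pi>\<^sub>E i\<in>UNIV. space borel)"
    by (simp add: PiE_UNIV_domain)
  from measurable_PiM_single'[OF component this] show ?thesis
    by simp
qed

lemma sets_PiM_lborel_if_compact:
  fixes C :: "(nat \<Rightarrow> real) set"
  assumes "compact C" "C \<subseteq> extensional I"
  shows "C \<in> sets (PiM I (\<lambda>_. lborel))"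
proof -
  have "C \<in> sets (PiM UNIV (\<lambda>_::nat. borel::real measure))"
    using assms(1) by (simp add: sets_PiM_equal_borel borel_closed compact_imp_closed)
  then have "(\<lambda>x. x) -` C \<inter> space (PiM I (\<lambda>_. lborel)) \<in> sets (PiM I (\<lambda>_. lborel))"
    by (rule measurable_sets[OF measurable_id_PiM_lborel_borel])
  moreover have "(\<lambda>x. x) -` C \<inter> space (PiM I (\<lambda>_. lborel)) = C"
    using assms(2) by (auto simp: space_PiM PiE_def)
  ultimately show ?thesis by simp
qed

lemma fmeasurable_PiM_lborel_if_compact:
  fixes C :: "(nat \<Rightarrow> real) set"
  assumes "finite I" "compact C" "C \<subseteq> extensional I"
  shows "C \<in> fmeasurable (PiM I (\<lambda>_. lborel))"
proof (rule fmeasurableI)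
  show "C \<in> sets (PiM I (\<lambda>_. lborel))"
    using assms(2,3) by (rule sets_PiM_lborel_if_compact)
  have "\<exists>B. \<forall>x\<in>C. \<bar>x i\<bar> \<le> B" for i
  proof -
    have "continuous_on C (\<lambda>x::nat\<Rightarrow>real. x i)"
      by (rule continuous_on_subset[OF continuous_on_product_coordinates]) simp
    then have "bounded ((\<lambda>x. x i) ` C)"
      using assms(2) by (blast intro: compact_imp_bounded compact_continuous_image)
    then show ?thesis by (auto simp: bounded_iff)
  qed
  then obtain B where B: "\<And>i x. x \<in> C \<Longrightarrow> \<bar>x i\<bar> \<le> B i" by metis
  have "C \<subseteq> (\<Pi>\<^sub>E i\<in>I. {-B i..B i})"
  proof
    fix x assume "x \<in> C"
    then have "- B i \<le> x i \<and> x i \<le> B i" for i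
      using B by (meson abs_le_iff minus_le_iff)
    with \<open>x \<in> C\<close> assms(3) show "x \<in> (\<Pi>\<^sub>E i\<in>I. {-B i..B i})"
      by (auto simp: PiE_def)
  qed
  then have "emeasure (PiM I (\<lambda>_. lborel)) C \<le> emeasure (PiM I (\<lambda>_. lborel)) (\<Pi>\<^sub>E i\<in>I. {-B i..B i})"
    by (rule emeasure_mono) (simp add: sets_PiM_I_finite[OF assms(1)])
  also have "\<dots> = (\<Prod>i\<in>I. emeasure lborel {-B i..B i})"
  proof -
    interpret product_sigma_finite "\<lambda>_. lborel" by standard
    show ?thesis using assms(1) by (simp add: emeasure_PiM)
  qed
  also have "\<dots> < \<infinity>"
    by (simp add: top.not_eq_extremum[symmetric] ennreal_prod_eq_top emeasure_lborel_Icc_eq)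
  finally show "emeasure (PiM I (\<lambda>_. lborel)) C < \<infinity>" .
qed

lemma compact_proj_del:
  assumes "compact A"
  shows "compact (proj_del m j A)"
proof -
  have "continuous_on A (\<lambda>x::nat\<Rightarrow>real. restrict x ({..<m} - {j}) i)" for i
    by (cases "i \<in> {..<m} - {j}")
       (auto intro: continuous_on_subset[OF continuous_on_product_coordinates])
  then have "continuous_on A (\<lambda>x::nat\<Rightarrow>real. restrict x ({..<m} - {j}))"
    by (rule continuous_on_coordinatewise_then_product)
  with assms show ?thesis
    unfolding proj_del_def by (rule compact_continuous_image[rotated])
qed

lemma proj_del_subset_extensional: "proj_del m j A \<subseteq> extensional ({..<m} - {j})"
  unfolding proj_del_def by auto

lemma proj_del_Un: "proj_del m j (A \<union> B) = proj_del m j A \<union> proj_del m j B"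
  unfolding proj_del_def by (rule image_Un)

lemma proj_del_Int_subset: "proj_del m j (A \<inter> B) \<subseteq> proj_del m j A \<inter> proj_del m j B"
  unfolding proj_del_def by (rule image_Int_subset)

lemma measure_Un_add_le_if_subset_Int:
  assumes "A \<in> fmeasurable M" "B \<in> fmeasurable M" "C \<in> sets M" "C \<subseteq> A \<inter> B"
  shows "measure M (A \<union> B) + measure M C \<le> measure M A + measure M B"
proof -
  have "A \<inter> B \<in> fmeasurable M"
    using assms(1,2) by (rule fmeasurable_Int_fmeasurable[OF _ fmeasurableD])
  then have "measure M C \<le> measure M (A \<inter> B)"
    using assms(3,4) by (intro measure_mono_fmeasurable) (auto dest: fmeasurableD)
  then show ?thesis
    using measure_Un3[OF assms(1,2)] by simp
qed

lemma measure_proj_del_submodular: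
  fixes m j :: nat and A B :: "(nat \<Rightarrow> real) set"
  assumes "compact A" "compact B"
  defines "N \<equiv> PiM ({..<m} - {j}) (\<lambda>_. lborel)"
  shows "measure N (proj_del m j (A \<union> B)) + measure N (proj_del m j (A \<inter> B))
           \<le> measure N (proj_del m j A) + measure N (proj_del m j B)"
proof -
  have fmeasurable: "proj_del m j C \<in> fmeasurable N" if "compact C" for C
    unfolding N_def using that
    by (intro fmeasurable_PiM_lborel_if_compact compact_proj_del proj_del_subset_extensional) simp
  have "proj_del m j (A \<inter> B) \<in> sets N"
    using fmeasurable[OF compact_Int[OF assms(1,2)]] by (rule fmeasurableD)
  from measure_Un_add_le_if_subset_Int[OF fmeasurable[OF assms(1)] fmeasurable[OF assms(2)]
      this proj_del_Int_subset]
  show ?thesis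
    by (simp only: proj_del_Un)
qed

lemma measure_body_modular:
  fixes m :: nat
  assumes "body m A" "body m B"
  defines "M \<equiv> PiM {..<m} (\<lambda>_. lborel)"
  shows "measure M (A \<union> B) + measure M (A \<inter> B) = measure M A + measure M B"
proof -
  have "C \<in> fmeasurable M" if "body m C" for C
    using that unfolding M_def body_def by (auto intro: fmeasurable_PiM_lborel_if_compact)
  from measure_Un3[OF this this, OF assms(1,2)] show ?thesis
    by simp
qed

theorem lemma4:
  fixes m :: nat and k :: real and A1 A2 :: "(nat \<Rightarrow> real) set"
  assumes "m \<ge> 1" and "k > 0" and "body m A1" and "body m A2"
  shows "deficiency m k (A1 \<union> A2) + deficiency m k (A1 \<inter> A2)
           \<ge> deficiency m k A1 + deficiency m k A2"
proof -
  let ?P = "\<lambda>A. \<Sum>j<m. measure (PiM ({..<m} - {j}) (\<lambda>_. lborel)) (proj_del m j A)"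
  have "compact A1" "compact A2"
    using assms(3,4) unfolding body_def by auto
  then have "?P (A1 \<union> A2) + ?P (A1 \<inter> A2) \<le> ?P A1 + ?P A2"
    unfolding sum.distrib[symmetric] by (intro sum_mono measure_proj_del_submodular)
  then have "k * (?P (A1 \<union> A2) + ?P (A1 \<inter> A2)) \<le> k * (?P A1 + ?P A2)"
    using assms(2) by (intro mult_left_mono) auto
  with measure_body_modular[OF assms(3,4)] show ?thesis
    unfolding deficiency_def by (simp add: algebra_simps)
qed

end
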